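(* Let $\mathbb{X}$ be a discrete group with identity $\circ$, let $\mu$ be a finitely supported probability measure on $\mathbb{X}$ satisfying (A1) $\mu(xzx^{-1})=\mu(z)$ for all $x,z\in\mathbb{X}$ and (A2) $\mu(z)=\mu(z^{-1})$ for all $z\in\mathbb{X}$, and let $(X_t)_{t\ge0}$ be the continuous-time Markov chain on $\mathbb{X}$ started at $X_0=\circ$ with generator $(Lf)(x)=\sum_{z\in\mathbb{X}}\mu(z)(f(xz)-f(x))$. Fix a function $f\colon\mathbb{X}\to\mathbb{R}$ and a time $t\ge 0$. If $\mathbb{E}[\Gamma f(X_t)]<\infty$, then $\mathbb{E}[f^2(X_t)]<\infty$ and $$\mathrm{Var}[f(X_t)]\le 2t\,\mathbb{E}[\Gamma f(X_t)].$$
   Context: Here $\Gamma f(x):=\frac12\sum_{z\in\mathbb{X}}\mu(z)\left(f(xz)-f(x)\right)^2$ (the carré du champ $\Gamma(f)=\frac12[L(f^2)-2fLf]$ of $L$, extended to arbitrary, possibly unbounded, $f$ by this formula). *)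

theory Defs
  imports "HOL-Analysis.Analysis" "HOL-Probability.Probability_Mass_Function"
begin

text \<open>The group is written additively (type class group_add, not necessarily
commutative): the product xz is x + z, the identity is 0, the inverse of z is - z.\<close>

primrec conv_pow :: "'a::group_add pmf \<Rightarrow> nat \<Rightarrow> 'a pmf" where
  "conv_pow \<mu> 0 = return_pmf 0"
| "conv_pow \<mu> (Suc n) = map_pmf (\<lambda>(x, z). x + z) (pair_pmf (conv_pow \<mu> n) \<mu>)"

text \<open>Law of X_t for the continuous-time Markov chain started at the identity with
generator (L f)(x) = sum_z mu(z) (f(x z) - f(x)): since mu is a probability
measure, the chain jumps at the times of a rate-1 Poisson process, each jump
right-multiplying by an independent mu-distributed step.\<close>
definition chain_law :: "'a::group_add pmf \<Rightarrow> real \<Rightarrow> 'a \<Rightarrow> real" where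
  "chain_law \<mu> t x = (\<Sum>n. exp (- t) * t ^ n / fact n * pmf (conv_pow \<mu> n) x)"

definition chain_expect :: "'a::group_add pmf \<Rightarrow> real \<Rightarrow> ('a \<Rightarrow> real) \<Rightarrow> real" where
  "chain_expect \<mu> t g = (\<Sum>\<^sub>\<infinity>x. chain_law \<mu> t x * g x)"

definition chain_var :: "'a::group_add pmf \<Rightarrow> real \<Rightarrow> ('a \<Rightarrow> real) \<Rightarrow> real" where
  "chain_var \<mu> t f = chain_expect \<mu> t (\<lambda>x. (f x)\<^sup>2) - (chain_expect \<mu> t f)\<^sup>2"

definition carre_du_champ :: "'a::group_add pmf \<Rightarrow> ('a \<Rightarrow> real) \<Rightarrow> 'a \<Rightarrow> real" where
  "carre_du_champ \<mu> f x = 1/2 * (\<Sum>z\<in>set_pmf \<mu>. pmf \<mu> z * (f (x + z) - f x)\<^sup>2)"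

end

theory Submission
  imports Defs
begin

text \<open>
  The chain is \<open>X\<^sub>t = S\<^sub>N\<close>, where \<open>S\<^sub>n\<close> is the random walk with independent
  \<open>\<mu>\<close>-distributed steps and \<open>N\<close> is an independent Poisson variable of mean \<open>t\<close>. Hence
  \<open>E g(X\<^sub>t) = \<Sum>\<^sub>n Poi\<^sub>t(n) P\<^sup>n g(0)\<close> for the transition operator \<open>P g(y) = \<Sum>\<^sub>z \<mu>(z) g(y + z)\<close>.

  Conjugation invariance of \<open>\<mu>\<close> makes \<open>P\<close> commute with right translations, so Jensen's
  inequality gives \<open>\<Gamma>(P\<^sup>k g) \<le> P\<^sup>k \<Gamma>(g)\<close>. Telescoping \<open>k \<mapsto> P\<^sup>k((P\<^bsup>n+1-k\<^esup> f)\<^sup>2)(0)\<close>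
  then yields the discrete-time inequality
  \<open>Var f(S\<^bsub>n+1\<^esub>) + (n+1) (h(n+1) - h(n))\<^sup>2 \<le> 2 (n+1) E \<Gamma>f(S\<^sub>n)\<close>, where \<open>h(n) = E f(S\<^sub>n)\<close>.
  By the law of total variance, \<open>Var f(X\<^sub>t)\<close> is the Poisson average of \<open>Var f(S\<^sub>n)\<close> plus the
  Poisson variance of \<open>h\<close>, and the Poincare inequality for the Poisson law bounds the latter by
  \<open>t\<close> times the Poisson average of \<open>(h(n+1) - h(n))\<^sup>2\<close>. Since \<open>(n+1) Poi\<^sub>t(n+1) = t Poi\<^sub>t(n)\<close>,
  these increment terms cancel and \<open>2 t E \<Gamma>f(X\<^sub>t)\<close> remains.
\<close>

definition poisson_weight :: "real \<Rightarrow> nat \<Rightarrow> real" where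
  "poisson_weight t n = exp (- t) * t ^ n / fact n"

lemma poisson_weight_nonneg: "t \<ge> 0 \<Longrightarrow> poisson_weight t n \<ge> 0"
  unfolding poisson_weight_def by simp

lemma poisson_weight_0_pos: "poisson_weight t 0 > 0"
  unfolding poisson_weight_def by simp

lemma poisson_weight_sums: "poisson_weight t sums 1"
proof -
  have "(\<lambda>n. exp (- t) * (t ^ n /\<^sub>R fact n)) sums (exp (- t) * exp t)"
    by (intro sums_mult exp_converges)
  moreover have "(\<lambda>n. exp (- t) * (t ^ n /\<^sub>R fact n)) = poisson_weight t"
    by (simp add: fun_eq_iff poisson_weight_def divide_inverse_commute)
  ultimately show ?thesis by (simp flip: exp_add)
qed

lemma summable_poisson_weight: "summable (poisson_weight t)"
  using poisson_weight_sums by (rule sums_summable)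

lemma poisson_weight_Suc: "real (Suc n) * poisson_weight t (Suc n) = t * poisson_weight t n"
  unfolding poisson_weight_def by (simp add: field_simps del: of_nat_Suc)

lemma sum_poisson_weight_le_1: "t \<ge> 0 \<Longrightarrow> sum (poisson_weight t) A \<le> 1"
  using sum_le_suminf[OF summable_poisson_weight, of A t] poisson_weight_nonneg[of t]
    sums_unique[OF poisson_weight_sums, of t]
  by (cases "finite A") auto

lemma poisson_weight_first_moment_atMost:
  "(\<Sum>a\<le>k. real a * poisson_weight t a) = t * (\<Sum>a\<le>k. poisson_weight t a) - t * poisson_weight t k"
proof (induction k)
  case (Suc k)
  then show ?case using poisson_weight_Suc[of k t] by (simp add: algebra_simps)
qed simp

section \<open>A Poincare inequality for the Poisson law\<close>

text \<open>The total weight of the pairs \<open>a \<le> k < b\<close>, i.e. of the paths from \<open>a\<close> to \<open>b\<close> that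
  cross the edge \<open>(k, k + 1)\<close>.\<close>

lemma poisson_crossing_weight_eq:
  assumes "k \<le> M"
  shows "(\<Sum>a\<le>k. \<Sum>b\<in>{k<..M}. poisson_weight t a * poisson_weight t b * (real b - real a))
       = t * (poisson_weight t k * (\<Sum>a\<le>M. poisson_weight t a)
              - (\<Sum>a\<le>k. poisson_weight t a) * poisson_weight t M)"
  using assms
proof (induction M rule: dec_induct)
  case base
  then show ?case by (simp add: algebra_simps)
next
  case (step M)
  let ?p = "poisson_weight t"
  have "{k<..Suc M} = insert (Suc M) {k<..M}"
    using step.hyps by auto
  then have "(\<Sum>a\<le>k. \<Sum>b\<in>{k<..Suc M}. ?p a * ?p b * (real b - real a))
      = (\<Sum>a\<le>k. \<Sum>b\<in>{k<..M}. ?p a * ?p b * (real b - real a))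
        + (\<Sum>a\<le>k. ?p a * ?p (Suc M) * (real (Suc M) - real a))"
    by (simp add: sum.distrib)
  also have "(\<Sum>a\<le>k. ?p a * ?p (Suc M) * (real (Suc M) - real a))
      = (real (Suc M) * ?p (Suc M)) * (\<Sum>a\<le>k. ?p a) - ?p (Suc M) * (\<Sum>a\<le>k. real a * ?p a)"
    by (simp add: sum_distrib_left sum_subtractf sum.distrib algebra_simps)
  also have "\<dots> = t * ?p M * (\<Sum>a\<le>k. ?p a) - ?p (Suc M) * (t * (\<Sum>a\<le>k. ?p a) - t * ?p k)"
    by (simp only: poisson_weight_Suc poisson_weight_first_moment_atMost)
  finally show ?case
    using step.IH by (simp add: algebra_simps)
qed

lemma poisson_crossing_weight_le:
  assumes "k \<le> M" "t \<ge> 0"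
  shows "(\<Sum>a\<le>k. \<Sum>b\<in>{k<..M}. poisson_weight t a * poisson_weight t b * (real b - real a))
       \<le> t * poisson_weight t k"
proof -
  let ?p = "poisson_weight t"
  have "?p k * (\<Sum>a\<le>M. ?p a) \<le> ?p k"
    using mult_left_mono[OF sum_poisson_weight_le_1 poisson_weight_nonneg] assms(2) by simp
  moreover have "0 \<le> (\<Sum>a\<le>k. ?p a) * ?p M"
    using assms(2) by (simp add: poisson_weight_nonneg sum_nonneg)
  ultimately have "?p k * (\<Sum>a\<le>M. ?p a) - (\<Sum>a\<le>k. ?p a) * ?p M \<le> ?p k"
    by linarith
  then show ?thesis
    using assms by (simp add: poisson_crossing_weight_eq mult_left_mono)
qed

lemma square_diff_le_sum_squares_increments:
  fixes h :: "nat \<Rightarrow> real"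
  assumes "a \<le> b"
  shows "(h b - h a)\<^sup>2 \<le> (real b - real a) * (\<Sum>k\<in>{a..<b}. (h (Suc k) - h k)\<^sup>2)"
  using sum_squared_le_sum_of_squares[of "\<lambda>k. h (Suc k) - h k" "{a..<b}"] assms
  by (simp add: sum_Suc_diff' of_nat_diff mult.commute)

lemma sum_pairs_symmetric_eq_twice_ordered:
  fixes w :: "'i::linorder \<Rightarrow> 'i \<Rightarrow> real"
  assumes "\<And>a b. w a b = w b a" "\<And>a. w a a = 0"
  shows "(\<Sum>a\<in>A. \<Sum>b\<in>A. w a b) = 2 * (\<Sum>a\<in>A. \<Sum>b\<in>A. if a < b then w a b else 0)"
proof -
  have "(\<Sum>a\<in>A. \<Sum>b\<in>A. w a b)
      = (\<Sum>a\<in>A. \<Sum>b\<in>A. if a < b then w a b else 0) + (\<Sum>a\<in>A. \<Sum>b\<in>A. if b < a then w b a else 0)"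
    unfolding sum.distrib[symmetric]
    by (intro sum.cong refl) (use assms in \<open>auto simp: not_less_iff_gr_or_eq\<close>)
  also have "(\<Sum>a\<in>A. \<Sum>b\<in>A. if b < a then w b a else 0) = (\<Sum>a\<in>A. \<Sum>b\<in>A. if a < b then w a b else 0)"
    by (rule sum.swap)
  finally show ?thesis by simp
qed

lemma poisson_double_sum_le:
  fixes h :: "nat \<Rightarrow> real"
  assumes t: "t \<ge> 0"
  shows "(\<Sum>a\<le>M. \<Sum>b\<le>M. poisson_weight t a * poisson_weight t b * (h b - h a)\<^sup>2)
           \<le> 2 * t * (\<Sum>k<M. poisson_weight t k * (h (Suc k) - h k)\<^sup>2)"
proof -
  let ?p = "poisson_weight t"
  \<comment> \<open>Cauchy-Schwarz along the path from \<open>a\<close> to \<open>b\<close>, then regroup the terms by edges.\<close>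
  define D where "D k = (h (Suc k) - h k)\<^sup>2" for k
  define c where "c a b k = (if a \<le> k \<and> k < b then ?p a * ?p b * (real b - real a) else 0)"
    for a b k :: nat
  have path: "(if a < b then ?p a * ?p b * (h b - h a)\<^sup>2 else 0) \<le> (\<Sum>k<M. D k * c a b k)"
    if "b \<le> M" for a b
  proof (cases "a < b")
    case True
    have "(\<Sum>k<M. D k * c a b k) = (\<Sum>k\<in>{a..<b}. ?p a * ?p b * (real b - real a) * D k)"
      using that by (intro sum.mono_neutral_cong_right) (auto simp: c_def)
    also have "\<dots> = ?p a * ?p b * ((real b - real a) * (\<Sum>k\<in>{a..<b}. D k))"
      by (simp add: sum_distrib_left mult.assoc)
    finally show ?thesis
      using True square_diff_le_sum_squares_increments[of a b h] t
      by (simp add: D_def mult_left_mono poisson_weight_nonneg)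
  qed (simp add: c_def sum_nonneg D_def)
  have crossing: "(\<Sum>a\<le>M. \<Sum>b\<le>M. c a b k) \<le> t * ?p k" if "k < M" for k
  proof -
    have "(\<Sum>a\<le>M. \<Sum>b\<le>M. c a b k) = (\<Sum>a\<le>k. \<Sum>b\<le>M. c a b k)"
      using that by (intro sum.mono_neutral_right) (auto simp: c_def)
    also have "\<dots> = (\<Sum>a\<le>k. \<Sum>b\<in>{k<..M}. ?p a * ?p b * (real b - real a))"
      by (intro sum.cong refl sum.mono_neutral_cong_right) (auto simp: c_def)
    also have "\<dots> \<le> t * ?p k"
      using that t by (intro poisson_crossing_weight_le) auto
    finally show ?thesis .
  qed
  have "(\<Sum>a\<le>M. \<Sum>b\<le>M. ?p a * ?p b * (h b - h a)\<^sup>2)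
      = 2 * (\<Sum>a\<le>M. \<Sum>b\<le>M. if a < b then ?p a * ?p b * (h b - h a)\<^sup>2 else 0)"
    by (rule sum_pairs_symmetric_eq_twice_ordered) (simp_all add: power2_commute)
  also have "\<dots> \<le> 2 * (\<Sum>a\<le>M. \<Sum>b\<le>M. \<Sum>k<M. D k * c a b k)"
    by (intro mult_left_mono sum_mono path) auto
  also have "\<dots> = 2 * (\<Sum>k<M. D k * (\<Sum>a\<le>M. \<Sum>b\<le>M. c a b k))"
    by (simp add: sum_distrib_left sum.swap[of _ "{..<M}"])
  also have "\<dots> \<le> 2 * (\<Sum>k<M. D k * (t * ?p k))"
    by (intro mult_left_mono sum_mono crossing) (auto simp: D_def)
  finally show ?thesis
    by (simp add: D_def sum_distrib_left mult_ac)
qed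

lemma sum_pairs_weighted_square_diff_eq:
  fixes w h :: "'i \<Rightarrow> real"
  shows "(\<Sum>a\<in>A. \<Sum>b\<in>A. w a * w b * (h b - h a)\<^sup>2)
       = 2 * ((\<Sum>a\<in>A. w a) * (\<Sum>a\<in>A. w a * (h a)\<^sup>2) - (\<Sum>a\<in>A. w a * h a)\<^sup>2)"
proof -
  have "(\<Sum>a\<in>A. \<Sum>b\<in>A. w a * w b * (h b - h a)\<^sup>2)
      = (\<Sum>a\<in>A. \<Sum>b\<in>A. w a * (w b * (h b)\<^sup>2) + (w a * (h a)\<^sup>2) * w b - 2 * ((w a * h a) * (w b * h b)))"
    by (intro sum.cong refl) (simp add: power2_eq_square algebra_simps)
  also have "\<dots> = (\<Sum>a\<in>A. \<Sum>b\<in>A. w a * (w b * (h b)\<^sup>2)) + (\<Sum>a\<in>A. \<Sum>b\<in>A. (w a * (h a)\<^sup>2) * w b)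
      - 2 * (\<Sum>a\<in>A. \<Sum>b\<in>A. (w a * h a) * (w b * h b))"
    by (simp add: sum.distrib sum_subtractf sum_distrib_left)
  also have "\<dots> = (\<Sum>a\<in>A. w a) * (\<Sum>a\<in>A. w a * (h a)\<^sup>2) + (\<Sum>a\<in>A. w a * (h a)\<^sup>2) * (\<Sum>a\<in>A. w a)
      - 2 * ((\<Sum>a\<in>A. w a * h a) * (\<Sum>a\<in>A. w a * h a))"
    unfolding sum_product ..
  finally show ?thesis
    by (simp add: power2_eq_square algebra_simps)
qed

lemma abs_le_1_plus_square: "\<bar>x::real\<bar> \<le> 1 + x\<^sup>2"
  using zero_le_power2[of "\<bar>x\<bar> - 1"] unfolding power2_diff power2_abs by simp

lemma summable_weighted_of_summable_weighted_square:
  fixes w h :: "nat \<Rightarrow> real"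
  assumes "\<And>k. w k \<ge> 0" "summable w" "summable (\<lambda>k. w k * (h k)\<^sup>2)"
  shows "summable (\<lambda>k. w k * h k)"
proof (rule summable_comparison_test'[where N = 0])
  show "summable (\<lambda>k. w k + w k * (h k)\<^sup>2)"
    using assms by (intro summable_add)
  show "norm (w k * h k) \<le> w k + w k * (h k)\<^sup>2" for k
    using mult_left_mono[OF abs_le_1_plus_square[of "h k"] assms(1)[of k]]
    by (simp add: abs_mult assms(1) algebra_simps)
qed

lemma poisson_double_sum_le_suminf:
  fixes h :: "nat \<Rightarrow> real"
  assumes t: "t \<ge> 0" and increments: "summable (\<lambda>k. poisson_weight t k * (h (Suc k) - h k)\<^sup>2)"
  shows "(\<Sum>a\<le>M. \<Sum>b\<le>M. poisson_weight t a * poisson_weight t b * (h b - h a)\<^sup>2)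
           \<le> 2 * t * (\<Sum>k. poisson_weight t k * (h (Suc k) - h k)\<^sup>2)"
proof -
  have "(\<Sum>a\<le>M. \<Sum>b\<le>M. poisson_weight t a * poisson_weight t b * (h b - h a)\<^sup>2)
      \<le> 2 * t * (\<Sum>k<M. poisson_weight t k * (h (Suc k) - h k)\<^sup>2)"
    by (rule poisson_double_sum_le[OF t])
  also have "\<dots> \<le> 2 * t * (\<Sum>k. poisson_weight t k * (h (Suc k) - h k)\<^sup>2)"
    using t by (intro mult_left_mono sum_le_suminf[OF increments]) (auto simp: poisson_weight_nonneg)
  finally show ?thesis .
qed

lemma summable_poisson_weight_square_of_increments:
  fixes h :: "nat \<Rightarrow> real"
  assumes t: "t \<ge> 0" and increments: "summable (\<lambda>k. poisson_weight t k * (h (Suc k) - h k)\<^sup>2)"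
  shows "summable (\<lambda>k. poisson_weight t k * (h k)\<^sup>2)"
proof -
  let ?p = "poisson_weight t"
  define D where "D = (\<Sum>k. ?p k * (h (Suc k) - h k)\<^sup>2)"
  \<comment> \<open>The row \<open>a = 0\<close> of the double sum controls the deviations from \<open>h 0\<close>.\<close>
  have "summable (\<lambda>b. ?p b * (h b - h 0)\<^sup>2)"
  proof (rule summableI_nonneg_bounded)
    show "(\<Sum>b<M. ?p b * (h b - h 0)\<^sup>2) \<le> 2 * t * D / ?p 0" for M
    proof -
      have "?p 0 * (\<Sum>b<M. ?p b * (h b - h 0)\<^sup>2) \<le> (\<Sum>b\<le>M. ?p 0 * ?p b * (h b - h 0)\<^sup>2)"
        unfolding sum_distrib_left mult.assoc
        by (rule sum_mono2) (auto simp: poisson_weight_nonneg t)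
      also have "\<dots> \<le> (\<Sum>a\<le>M. \<Sum>b\<le>M. ?p a * ?p b * (h b - h a)\<^sup>2)"
        by (rule member_le_sum[where i = 0 and f = "\<lambda>a. \<Sum>b\<le>M. ?p a * ?p b * (h b - h a)\<^sup>2"])
          (auto intro!: sum_nonneg simp: poisson_weight_nonneg t)
      also have "\<dots> \<le> 2 * t * D"
        unfolding D_def by (rule poisson_double_sum_le_suminf[OF assms])
      finally show ?thesis
        using poisson_weight_0_pos[of t] by (simp add: field_simps)
    qed
  qed (simp add: poisson_weight_nonneg t)
  then have "summable (\<lambda>k. 2 * (?p k * (h k - h 0)\<^sup>2) + 2 * (h 0)\<^sup>2 * ?p k)"
    by (intro summable_add summable_mult summable_poisson_weight)
  then show ?thesis
  proof (rule summable_comparison_test'[where N = 0])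
    show "norm (?p k * (h k)\<^sup>2) \<le> 2 * (?p k * (h k - h 0)\<^sup>2) + 2 * (h 0)\<^sup>2 * ?p k" for k
    proof -
      have "(h k)\<^sup>2 \<le> 2 * (h k - h 0)\<^sup>2 + 2 * (h 0)\<^sup>2"
        using zero_le_power2[of "h k - 2 * h 0"] by (simp add: power2_eq_square algebra_simps)
      from mult_left_mono[OF this poisson_weight_nonneg[OF t, of k]] show ?thesis
        by (simp add: abs_mult poisson_weight_nonneg t algebra_simps)
    qed
  qed
qed

lemma poisson_poincare:
  fixes h :: "nat \<Rightarrow> real"
  assumes t: "t \<ge> 0" and increments: "summable (\<lambda>k. poisson_weight t k * (h (Suc k) - h k)\<^sup>2)"
  shows "summable (\<lambda>k. poisson_weight t k * (h k)\<^sup>2)" "summable (\<lambda>k. poisson_weight t k * h k)"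
    and "(\<Sum>k. poisson_weight t k * (h k)\<^sup>2) - (\<Sum>k. poisson_weight t k * h k)\<^sup>2
       \<le> t * (\<Sum>k. poisson_weight t k * (h (Suc k) - h k)\<^sup>2)"
proof -
  let ?p = "poisson_weight t"
  show squares: "summable (\<lambda>k. ?p k * (h k)\<^sup>2)"
    using summable_poisson_weight_square_of_increments[OF assms] .
  show weighted: "summable (\<lambda>k. ?p k * h k)"
    by (rule summable_weighted_of_summable_weighted_square[OF _ summable_poisson_weight squares])
      (simp add: poisson_weight_nonneg t)
  define D where "D = (\<Sum>k. ?p k * (h (Suc k) - h k)\<^sup>2)"
  have "(\<Sum>a\<le>M. ?p a) * (\<Sum>a\<le>M. ?p a * (h a)\<^sup>2) - (\<Sum>a\<le>M. ?p a * h a)\<^sup>2 \<le> t * D" for M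
    using poisson_double_sum_le_suminf[OF assms, of M]
    unfolding sum_pairs_weighted_square_diff_eq D_def by simp
  moreover have "(\<lambda>M. (\<Sum>a\<le>M. ?p a) * (\<Sum>a\<le>M. ?p a * (h a)\<^sup>2) - (\<Sum>a\<le>M. ?p a * h a)\<^sup>2)
      \<longlonglongrightarrow> 1 * (\<Sum>k. ?p k * (h k)\<^sup>2) - (\<Sum>k. ?p k * h k)\<^sup>2"
    using summable_LIMSEQ'[OF summable_poisson_weight, of t] sums_unique[OF poisson_weight_sums, of t]
    by (intro tendsto_intros summable_LIMSEQ' squares weighted) simp
  ultimately have "(\<Sum>k. ?p k * (h k)\<^sup>2) - (\<Sum>k. ?p k * h k)\<^sup>2 \<le> t * D"
    using LIMSEQ_le_const2 by fastforce
  then show "(\<Sum>k. ?p k * (h k)\<^sup>2) - (\<Sum>k. ?p k * h k)\<^sup>2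
      \<le> t * (\<Sum>k. ?p k * (h (Suc k) - h k)\<^sup>2)"
    by (simp add: D_def)
qed

section \<open>Poisson mixtures\<close>

lemma poisson_weighted_sum_le_of_Suc_bound:
  fixes r c :: "nat \<Rightarrow> real"
  assumes t: "t \<ge> 0" and "r 0 = 0" and r_nonneg: "\<And>n. r n \<ge> 0"
    and r_le: "\<And>n. r (Suc n) \<le> real (Suc n) * c n"
    and c: "summable (\<lambda>n. poisson_weight t n * c n)"
  shows "summable (\<lambda>n. poisson_weight t n * r n)"
    and "(\<Sum>n. poisson_weight t n * r n) \<le> t * (\<Sum>n. poisson_weight t n * c n)"
proof -
  let ?p = "poisson_weight t"
  \<comment> \<open>Multiplying by the Poisson weights turns the factor \<open>n + 1\<close> into \<open>t\<close>.\<close>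
  have shift_le: "?p (Suc n) * r (Suc n) \<le> t * (?p n * c n)" for n
  proof -
    have "?p (Suc n) * r (Suc n) \<le> ?p (Suc n) * (real (Suc n) * c n)"
      by (rule mult_left_mono[OF r_le poisson_weight_nonneg[OF t]])
    also have "\<dots> = (real (Suc n) * ?p (Suc n)) * c n"
      by (simp only: mult_ac)
    finally show ?thesis
      by (simp only: poisson_weight_Suc mult.assoc)
  qed
  have bound: "summable (\<lambda>n. t * (?p n * c n))"
    using c by (rule summable_mult)
  have shift: "summable (\<lambda>n. ?p (Suc n) * r (Suc n))"
    by (rule summable_comparison_test'[OF bound])
      (use shift_le r_nonneg poisson_weight_nonneg[OF t] in \<open>auto simp: abs_mult\<close>)
  then show r: "summable (\<lambda>n. ?p n * r n)"
    by (subst (asm) summable_Suc_iff)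
  have "(\<Sum>n. ?p n * r n) = (\<Sum>n. ?p (Suc n) * r (Suc n))"
    using suminf_split_head[OF r] \<open>r 0 = 0\<close> by simp
  also have "\<dots> \<le> (\<Sum>n. t * (?p n * c n))"
    by (rule suminf_le[OF shift_le shift bound])
  finally show "(\<Sum>n. ?p n * r n) \<le> t * (\<Sum>n. ?p n * c n)"
    using suminf_mult[OF c, of t] by simp
qed

lemma poisson_mixture_variance_le:
  fixes e h g :: "nat \<Rightarrow> real"
  assumes t: "t \<ge> 0"
    and g: "summable (\<lambda>n. poisson_weight t n * g n)"
    and jensen: "\<And>n. (h n)\<^sup>2 \<le> e n"
    and base: "e 0 = (h 0)\<^sup>2"
    and step: "\<And>n. e (Suc n) + real (Suc n) * (h (Suc n) - h n)\<^sup>2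
                   \<le> (h (Suc n))\<^sup>2 + 2 * real (Suc n) * g n"
  shows "summable (\<lambda>n. poisson_weight t n * e n)" "summable (\<lambda>n. poisson_weight t n * h n)"
    and "(\<Sum>n. poisson_weight t n * e n) - (\<Sum>n. poisson_weight t n * h n)\<^sup>2
       \<le> 2 * t * (\<Sum>n. poisson_weight t n * g n)"
proof -
  let ?p = "poisson_weight t"
  \<comment> \<open>Law of total variance: \<open>r\<close> are the conditional variances, \<open>h\<close> the conditional means.\<close>
  define d where "d n = h (Suc n) - h n" for n
  define r where "r n = e n - (h n)\<^sup>2" for n
  have r_nonneg: "r n \<ge> 0" for n
    using jensen[of n] by (simp add: r_def)
  have r_le: "r (Suc n) \<le> real (Suc n) * (2 * g n - (d n)\<^sup>2)" for n
    using step[of n] by (simp add: r_def d_def algebra_simps)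
  have "0 \<le> real (Suc n) * (2 * g n - (d n)\<^sup>2)" for n
    using r_nonneg[of "Suc n"] r_le[of n] by linarith
  then have d_le: "(d n)\<^sup>2 \<le> 2 * g n" for n
    by (simp add: zero_le_mult_iff del: of_nat_Suc)
  have d: "summable (\<lambda>n. ?p n * (d n)\<^sup>2)"
  proof (rule summable_comparison_test'[OF summable_mult[OF g, of 2]])
    show "norm (?p n * (d n)\<^sup>2) \<le> 2 * (?p n * g n)" for n
      using mult_left_mono[OF d_le[of n] poisson_weight_nonneg[OF t, of n]]
      by (simp add: abs_mult poisson_weight_nonneg t)
  qed
  have c_sums: "(\<lambda>n. ?p n * (2 * g n - (d n)\<^sup>2)) sums (2 * (\<Sum>n. ?p n * g n) - (\<Sum>n. ?p n * (d n)\<^sup>2))"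
    using sums_diff[OF sums_mult[OF summable_sums[OF g], of 2] summable_sums[OF d]]
    by (simp add: algebra_simps)
  have "r 0 = 0"
    using base by (simp add: r_def)
  note r = poisson_weighted_sum_le_of_Suc_bound[OF t this r_nonneg r_le sums_summable[OF c_sums]]
  note poincare = poisson_poincare[OF t d[unfolded d_def]]
  have e_eq: "(\<lambda>n. ?p n * e n) = (\<lambda>n. ?p n * r n + ?p n * (h n)\<^sup>2)"
    by (simp add: fun_eq_iff r_def algebra_simps)
  show "summable (\<lambda>n. ?p n * e n)"
    unfolding e_eq using r(1) poincare(1) by (rule summable_add)
  show "summable (\<lambda>n. ?p n * h n)"
    by (rule poincare(2))
  have "(\<Sum>n. ?p n * e n) - (\<Sum>n. ?p n * h n)\<^sup>2
      = (\<Sum>n. ?p n * r n) + ((\<Sum>n. ?p n * (h n)\<^sup>2) - (\<Sum>n. ?p n * h n)\<^sup>2)"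
    unfolding e_eq suminf_add[OF r(1) poincare(1), symmetric] by simp
  also have "\<dots> \<le> t * (2 * (\<Sum>n. ?p n * g n) - (\<Sum>n. ?p n * (d n)\<^sup>2)) + t * (\<Sum>n. ?p n * (d n)\<^sup>2)"
    using r(2) poincare(3) sums_unique[OF c_sums]
    by (intro add_mono) (simp_all add: d_def)
  finally show "(\<Sum>n. ?p n * e n) - (\<Sum>n. ?p n * h n)\<^sup>2 \<le> 2 * t * (\<Sum>n. ?p n * g n)"
    by (simp add: algebra_simps)
qed

lemma has_sum_marginals:
  fixes F :: "'x \<times> 'y \<Rightarrow> real"
  assumes F: "F summable_on UNIV"
    and rows: "\<And>x. ((\<lambda>y. F (x, y)) has_sum a x) UNIV"
    and cols: "\<And>y. ((\<lambda>x. F (x, y)) has_sum b y) UNIV"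
  shows "(a has_sum infsum F UNIV) UNIV" "(b has_sum infsum F UNIV) UNIV"
proof -
  have H: "(F has_sum infsum F UNIV) (UNIV \<times> UNIV)"
    using has_sum_infsum[OF F] by simp
  then show "(a has_sum infsum F UNIV) UNIV"
    by (rule has_sum_SigmaD) (use rows in auto)
  from has_sum_swap[THEN iffD1, OF H] show "(b has_sum infsum F UNIV) UNIV"
    by (rule has_sum_SigmaD) (use cols in auto)
qed

lemma nonneg_summable_on_of_cols:
  fixes F :: "'x \<times> 'y \<Rightarrow> real"
  assumes "\<And>p. F p \<ge> 0"
    and cols: "\<And>y. ((\<lambda>x. F (x, y)) has_sum b y) UNIV" and "b summable_on UNIV"
  shows "F summable_on UNIV"
proof -
  have "(\<lambda>(y, x). F (x, y)) summable_on UNIV \<times> UNIV"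
    by (rule summable_on_SigmaI[where g = b]) (use assms in auto)
  then show ?thesis
    using summable_on_swap[where f = F and A = UNIV and B = UNIV] by simp
qed

lemma nonneg_summable_on_marginals_iff:
  fixes F :: "'x \<times> 'y \<Rightarrow> real"
  assumes nonneg: "\<And>p. F p \<ge> 0"
    and rows: "\<And>x. ((\<lambda>y. F (x, y)) has_sum a x) UNIV"
    and cols: "\<And>y. ((\<lambda>x. F (x, y)) has_sum b y) UNIV"
  shows "a summable_on UNIV \<longleftrightarrow> b summable_on UNIV"
proof
  assume "a summable_on UNIV"
  then have "F summable_on UNIV \<times> UNIV"
    by (intro summable_on_SigmaI[where g = a]) (use rows nonneg in auto)
  then show "b summable_on UNIV"
    using has_sum_marginals(2)[OF _ rows cols] by (auto intro: has_sum_imp_summable)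
next
  assume "b summable_on UNIV"
  then have "F summable_on UNIV"
    by (rule nonneg_summable_on_of_cols[OF nonneg cols])
  then show "a summable_on UNIV"
    using has_sum_marginals(1)[OF _ rows cols] by (auto intro: has_sum_imp_summable)
qed

section \<open>The random walk\<close>

lemma carre_du_champ_nonneg: "carre_du_champ \<mu> g x \<ge> 0"
  unfolding carre_du_champ_def by (intro mult_nonneg_nonneg sum_nonneg) auto

locale finite_walk =
  fixes \<mu> :: "'a::group_add pmf"
  assumes finite_support: "finite (set_pmf \<mu>)"
begin

text \<open>The generator of the chain is \<open>step_op - id\<close>.\<close>

definition step_op :: "('a \<Rightarrow> real) \<Rightarrow> 'a \<Rightarrow> real" where
  "step_op g y = (\<Sum>z\<in>set_pmf \<mu>. pmf \<mu> z * g (y + z))"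

definition step_pow :: "nat \<Rightarrow> ('a \<Rightarrow> real) \<Rightarrow> 'a \<Rightarrow> real" where
  "step_pow n = step_op ^^ n"

lemma step_op_plus: "step_op (\<lambda>x. g x + h x) = (\<lambda>y. step_op g y + step_op h y)"
  by (simp add: fun_eq_iff step_op_def sum.distrib algebra_simps)

lemma step_op_diff: "step_op (\<lambda>x. g x - h x) = (\<lambda>y. step_op g y - step_op h y)"
  by (simp add: fun_eq_iff step_op_def sum_subtractf algebra_simps)

lemma step_op_cmult: "step_op (\<lambda>x. c * g x) = (\<lambda>y. c * step_op g y)"
  by (simp add: fun_eq_iff step_op_def sum_distrib_left algebra_simps)

lemma step_op_sum: "step_op (\<lambda>x. \<Sum>i\<in>I. g i x) = (\<lambda>y. \<Sum>i\<in>I. step_op (g i) y)"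
  by (simp add: fun_eq_iff step_op_def sum_distrib_left sum.swap[of _ "set_pmf \<mu>"])

lemma step_op_const: "step_op (\<lambda>x. c) = (\<lambda>y. c)"
  using sum_pmf_eq_1[OF finite_support] by (simp add: fun_eq_iff step_op_def flip: sum_distrib_right)

lemma step_op_mono: "(\<And>x. g x \<le> h x) \<Longrightarrow> step_op g y \<le> step_op h y"
  unfolding step_op_def by (intro sum_mono mult_left_mono) auto

lemma step_op_square_dev:
  "step_op (\<lambda>x. (g x - c)\<^sup>2) y = step_op (\<lambda>x. (g x)\<^sup>2) y - 2 * c * step_op g y + c\<^sup>2"
proof -
  have "(\<lambda>x. (g x - c)\<^sup>2) = (\<lambda>x. ((g x)\<^sup>2 - 2 * c * g x) + c\<^sup>2)"
    by (simp add: fun_eq_iff power2_diff)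
  then show ?thesis
    by (simp add: step_op_plus step_op_diff step_op_cmult step_op_const)
qed

lemma step_op_jensen: "(step_op g y)\<^sup>2 \<le> step_op (\<lambda>x. (g x)\<^sup>2) y"
  using step_op_mono[of "\<lambda>x. 0" "\<lambda>x. (g x - step_op g y)\<^sup>2" y]
  unfolding step_op_square_dev by (simp add: step_op_const power2_eq_square)

lemma step_pow_0 [simp]: "step_pow 0 g = g"
  by (simp add: step_pow_def)

lemma step_pow_Suc: "step_pow (Suc n) g = step_pow n (step_op g)"
  by (simp add: step_pow_def funpow_swap1)

lemma step_pow_Suc': "step_pow (Suc n) g = step_op (step_pow n g)"
  by (simp add: step_pow_def)

lemma step_pow_add: "step_pow (m + n) g = step_pow m (step_pow n g)"
  by (simp add: step_pow_def funpow_add)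

lemma step_pow_plus_fun: "step_pow n (\<lambda>x. g x + h x) = (\<lambda>y. step_pow n g y + step_pow n h y)"
  by (induction n arbitrary: g h) (simp_all add: step_pow_Suc step_op_plus)

lemma step_pow_diff: "step_pow n (\<lambda>x. g x - h x) = (\<lambda>y. step_pow n g y - step_pow n h y)"
  by (induction n arbitrary: g h) (simp_all add: step_pow_Suc step_op_diff)

lemma step_pow_cmult: "step_pow n (\<lambda>x. c * g x) = (\<lambda>y. c * step_pow n g y)"
  by (induction n arbitrary: g) (simp_all add: step_pow_Suc step_op_cmult)

lemma step_pow_sum: "step_pow n (\<lambda>x. \<Sum>i\<in>I. g i x) = (\<lambda>y. \<Sum>i\<in>I. step_pow n (g i) y)"
  by (induction n arbitrary: g) (simp_all add: step_pow_Suc step_op_sum)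

lemma step_pow_const: "step_pow n (\<lambda>x. c) = (\<lambda>y. c)"
  by (induction n) (simp_all add: step_pow_Suc step_op_const)

lemma step_pow_mono: "(\<And>x. g x \<le> h x) \<Longrightarrow> step_pow n g y \<le> step_pow n h y"
  by (induction n arbitrary: g h y) (simp_all add: step_pow_Suc step_op_mono)

lemma step_pow_nonneg: "(\<And>x. g x \<ge> 0) \<Longrightarrow> step_pow n g y \<ge> 0"
  using step_pow_mono[of "\<lambda>x. 0" g n y] by (simp add: step_pow_const)

lemma step_pow_jensen: "(step_pow n g y)\<^sup>2 \<le> step_pow n (\<lambda>x. (g x)\<^sup>2) y"
proof (induction n arbitrary: g y)
  case (Suc n)
  have "(step_pow n (step_op g) y)\<^sup>2 \<le> step_pow n (\<lambda>x. (step_op g x)\<^sup>2) y"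
    by (rule Suc.IH)
  also have "\<dots> \<le> step_pow n (step_op (\<lambda>x. (g x)\<^sup>2)) y"
    by (intro step_pow_mono step_op_jensen)
  finally show ?case by (simp add: step_pow_Suc)
qed simp

lemma finite_set_pmf_conv_pow: "finite (set_pmf (conv_pow \<mu> n))"
  by (induction n) (auto simp: finite_support)

lemma sum_conv_pow_eq_step_pow:
  "(\<Sum>x\<in>set_pmf (conv_pow \<mu> n). pmf (conv_pow \<mu> n) x * g x) = step_pow n g 0"
proof (induction n arbitrary: g)
  case (Suc n)
  let ?Q = "conv_pow \<mu> n"
  have "(\<Sum>x\<in>set_pmf (conv_pow \<mu> (Suc n)). pmf (conv_pow \<mu> (Suc n)) x * g x)
      = measure_pmf.expectation (conv_pow \<mu> (Suc n)) g"
    by (subst integral_measure_pmf_real[of "set_pmf (conv_pow \<mu> (Suc n))"])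
      (use finite_set_pmf_conv_pow[of "Suc n"] in \<open>auto simp: mult.commute\<close>)
  also have "\<dots> = measure_pmf.expectation (pair_pmf ?Q \<mu>) (\<lambda>p. g (fst p + snd p))"
    by (simp add: integral_map_pmf case_prod_beta)
  also have "\<dots> = (\<Sum>p\<in>set_pmf ?Q \<times> set_pmf \<mu>. pmf (pair_pmf ?Q \<mu>) p * g (fst p + snd p))"
    by (subst integral_measure_pmf_real[of "set_pmf ?Q \<times> set_pmf \<mu>"])
      (auto simp: finite_support finite_set_pmf_conv_pow mult.commute)
  also have "\<dots> = (\<Sum>x\<in>set_pmf ?Q. \<Sum>z\<in>set_pmf \<mu>. pmf ?Q x * (pmf \<mu> z * g (x + z)))"
    by (subst sum.cartesian_product) (auto intro!: sum.cong simp: pmf_pair)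
  also have "\<dots> = (\<Sum>x\<in>set_pmf ?Q. pmf ?Q x * step_op g x)"
    by (simp add: step_op_def sum_distrib_left)
  finally show ?case by (simp add: Suc.IH step_pow_Suc)
qed simp

lemma carre_du_champ_eq_step_op: "2 * carre_du_champ \<mu> g y = step_op (\<lambda>x. (g x - g y)\<^sup>2) y"
  by (simp add: carre_du_champ_def step_op_def)

lemma step_op_variance_eq:
  "step_op (\<lambda>x. (g x)\<^sup>2) y - (step_op g y)\<^sup>2 = 2 * carre_du_champ \<mu> g y - (step_op g y - g y)\<^sup>2"
  unfolding carre_du_champ_eq_step_op step_op_square_dev by (simp add: power2_diff)

end

section \<open>The chain as a Poisson mixture of the random walk\<close>

text \<open>\<open>poisson_weight t n * pmf (conv_pow \<mu> n) x\<close> is the joint law of \<open>(X\<^sub>t, N)\<close> at \<open>(x, n)\<close>.\<close>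

lemma chain_law_has_sum:
  assumes "t \<ge> 0"
  shows "((\<lambda>n. poisson_weight t n * pmf (conv_pow \<mu> n) x) has_sum chain_law \<mu> t x) UNIV"
proof -
  have "summable (\<lambda>n. poisson_weight t n * pmf (conv_pow \<mu> n) x)"
  proof (rule summable_comparison_test'[OF summable_poisson_weight])
    show "norm (poisson_weight t n * pmf (conv_pow \<mu> n) x) \<le> poisson_weight t n" for n
      using poisson_weight_nonneg[OF assms, of n] pmf_le_1[of "conv_pow \<mu> n" x]
      by (simp add: abs_mult mult_left_le)
  qed
  then have "(\<lambda>n. poisson_weight t n * pmf (conv_pow \<mu> n) x) sums chain_law \<mu> t x"
    by (simp add: chain_law_def poisson_weight_def summable_sums)
  then show ?thesis
    by (rule sums_nonneg_imp_has_sum) (simp add: poisson_weight_nonneg[OF assms])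
qed

lemma joint_law_rows:
  assumes "t \<ge> 0"
  shows "((\<lambda>n. poisson_weight t n * pmf (conv_pow \<mu> n) x * g x) has_sum chain_law \<mu> t x * g x) UNIV"
  using has_sum_cmult_left[OF chain_law_has_sum[OF assms, of \<mu> x], of "g x"] by simp

context finite_walk
begin

lemma joint_law_cols:
  "((\<lambda>x. poisson_weight t n * pmf (conv_pow \<mu> n) x * g x) has_sum poisson_weight t n * step_pow n g 0) UNIV"
proof (rule has_sum_finite_neutralI[where B = "set_pmf (conv_pow \<mu> n)"])
  show "poisson_weight t n * step_pow n g 0
      = (\<Sum>x\<in>set_pmf (conv_pow \<mu> n). poisson_weight t n * pmf (conv_pow \<mu> n) x * g x)"
    by (simp add: sum_distrib_left mult.assoc flip: sum_conv_pow_eq_step_pow)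
qed (auto simp: finite_set_pmf_conv_pow set_pmf_iff)

lemma summable_on_chain_iff:
  assumes "t \<ge> 0" "\<And>x. g x \<ge> 0"
  shows "(\<lambda>x. chain_law \<mu> t x * g x) summable_on UNIV
     \<longleftrightarrow> summable (\<lambda>n. poisson_weight t n * step_pow n g 0)"
proof -
  have "(\<lambda>x. chain_law \<mu> t x * g x) summable_on UNIV
      \<longleftrightarrow> (\<lambda>n. poisson_weight t n * step_pow n g 0) summable_on UNIV"
    by (rule nonneg_summable_on_marginals_iff
        [where F = "\<lambda>(x, n). poisson_weight t n * pmf (conv_pow \<mu> n) x * g x"])
      (use assms joint_law_rows joint_law_cols in \<open>auto simp: poisson_weight_nonneg\<close>)
  also have "\<dots> \<longleftrightarrow> summable (\<lambda>n. poisson_weight t n * step_pow n g 0)"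
    using assms by (intro summable_on_UNIV_nonneg_real_iff) (simp add: poisson_weight_nonneg step_pow_nonneg)
  finally show ?thesis .
qed

lemma chain_expect_eq_suminf:
  assumes "t \<ge> 0"
    and "(\<lambda>(x, n). poisson_weight t n * pmf (conv_pow \<mu> n) x * g x) summable_on UNIV"
  shows "chain_expect \<mu> t g = (\<Sum>n. poisson_weight t n * step_pow n g 0)"
proof -
  define F where "F = (\<lambda>(x, n). poisson_weight t n * pmf (conv_pow \<mu> n) x * g x)"
  have F: "F summable_on UNIV"
    using assms(2) by (simp add: F_def)
  have rows: "((\<lambda>n. F (x, n)) has_sum chain_law \<mu> t x * g x) UNIV" for x
    using joint_law_rows[OF assms(1)] by (simp add: F_def)
  have cols: "((\<lambda>x. F (x, n)) has_sum poisson_weight t n * step_pow n g 0) UNIV" for n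
    using joint_law_cols by (simp add: F_def)
  show ?thesis
    unfolding chain_expect_def
    using infsumI[OF has_sum_marginals(1)[OF F rows cols]]
      sums_unique[OF has_sum_imp_sums[OF has_sum_marginals(2)[OF F rows cols]]]
    by simp
qed

lemma summable_on_joint_law_nonneg:
  assumes "t \<ge> 0" "\<And>x. g x \<ge> 0" "summable (\<lambda>n. poisson_weight t n * step_pow n g 0)"
  shows "(\<lambda>(x, n). poisson_weight t n * pmf (conv_pow \<mu> n) x * g x) summable_on UNIV"
proof (rule nonneg_summable_on_of_cols)
  show "(\<lambda>n. poisson_weight t n * step_pow n g 0) summable_on UNIV"
    using assms by (simp add: summable_on_UNIV_nonneg_real_iff poisson_weight_nonneg step_pow_nonneg)
qed (use assms joint_law_cols in \<open>auto simp: poisson_weight_nonneg\<close>)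

lemma summable_on_joint_law_of_square:
  assumes t: "t \<ge> 0" and sq: "summable (\<lambda>n. poisson_weight t n * step_pow n (\<lambda>x. (f x)\<^sup>2) 0)"
  shows "(\<lambda>(x, n). poisson_weight t n * pmf (conv_pow \<mu> n) x * f x) summable_on UNIV"
proof -
  have "summable (\<lambda>n. poisson_weight t n * step_pow n (\<lambda>x. 1 + (f x)\<^sup>2) 0)"
    using summable_add[OF summable_poisson_weight sq]
    by (simp add: step_pow_plus_fun step_pow_const algebra_simps)
  then have dominating:
    "(\<lambda>(x, n). poisson_weight t n * pmf (conv_pow \<mu> n) x * (1 + (f x)\<^sup>2)) summable_on UNIV"
    by (rule summable_on_joint_law_nonneg[OF t, rotated]) simp
  have "(\<lambda>p. norm (case p of (x, n) \<Rightarrow> poisson_weight t n * pmf (conv_pow \<mu> n) x * f x)) summable_on UNIV"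
    by (rule Infinite_Sum.abs_summable_on_comparison_test'[OF dominating])
      (auto simp: abs_mult poisson_weight_nonneg[OF t] abs_le_1_plus_square intro!: mult_left_mono)
  then show ?thesis
    using summable_on_iff_abs_summable_on_real by blast
qed

end

section \<open>Conjugation-invariant steps\<close>

locale conjugation_invariant_walk = finite_walk +
  assumes conjugation_invariant: "\<And>x z. pmf \<mu> (x + z + - x) = pmf \<mu> z"
begin

lemma step_op_right_translate: "step_op g (x + z) = step_op (\<lambda>y. g (y + z)) x"
  unfolding step_op_def
proof (rule sum.reindex_bij_witness[where j = "\<lambda>w. z + w - z" and i = "\<lambda>v. - z + v + z"])
  fix w assume "w \<in> set_pmf \<mu>"
  then show "z + w - z \<in> set_pmf \<mu>"
    using conjugation_invariant[of z w] by (simp add: set_pmf_iff)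
  show "pmf \<mu> (z + w - z) * g (x + (z + w - z) + z) = pmf \<mu> w * g (x + z + w)"
    using conjugation_invariant[of z w] by (simp add: add.assoc)
next
  fix v assume "v \<in> set_pmf \<mu>"
  then show "- z + v + z \<in> set_pmf \<mu>"
    using conjugation_invariant[of "- z" v] by (simp add: set_pmf_iff)
qed (simp_all add: add.assoc)

lemma step_pow_right_translate: "step_pow n g (x + z) = step_pow n (\<lambda>y. g (y + z)) x"
proof (induction n arbitrary: g x)
  case (Suc n)
  have "step_pow n (step_op g) (x + z) = step_pow n (\<lambda>y. step_op g (y + z)) x"
    by (rule Suc.IH)
  also have "(\<lambda>y. step_op g (y + z)) = step_op (\<lambda>y. g (y + z))"
    by (simp add: fun_eq_iff step_op_right_translate)
  finally show ?case by (simp add: step_pow_Suc)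
qed simp

lemma carre_du_champ_step_pow_le:
  "carre_du_champ \<mu> (step_pow n g) x \<le> step_pow n (carre_du_champ \<mu> g) x"
proof -
  have "carre_du_champ \<mu> (step_pow n g) x
      = 1/2 * (\<Sum>z\<in>set_pmf \<mu>. pmf \<mu> z * (step_pow n (\<lambda>y. g (y + z) - g y) x)\<^sup>2)"
    by (simp add: carre_du_champ_def step_pow_right_translate step_pow_diff)
  also have "\<dots> \<le> 1/2 * (\<Sum>z\<in>set_pmf \<mu>. pmf \<mu> z * step_pow n (\<lambda>y. (g (y + z) - g y)\<^sup>2) x)"
    by (intro mult_left_mono sum_mono step_pow_jensen) auto
  also have "\<dots> = 1/2 * step_pow n (\<lambda>y. \<Sum>z\<in>set_pmf \<mu>. pmf \<mu> z * (g (y + z) - g y)\<^sup>2) x"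
    by (simp only: step_pow_sum step_pow_cmult)
  also have "\<dots> = step_pow n (carre_du_champ \<mu> g) x"
    unfolding carre_du_champ_def by (simp only: step_pow_cmult)
  finally show ?thesis .
qed

lemma step_pow_telescoping_term_le:
  assumes "n = k + m"
  shows "step_pow (Suc k) (\<lambda>x. (step_pow m f x)\<^sup>2) y - step_pow k (\<lambda>x. (step_pow (Suc m) f x)\<^sup>2) y
      \<le> 2 * step_pow n (carre_du_champ \<mu> f) y - (step_pow (Suc n) f y - step_pow n f y)\<^sup>2"
proof -
  define g where "g = step_pow m f"
  have "step_pow (Suc k) (\<lambda>x. (g x)\<^sup>2) y - step_pow k (\<lambda>x. (step_op g x)\<^sup>2) y
      = step_pow k (\<lambda>x. 2 * carre_du_champ \<mu> g x - (step_op g x - g x)\<^sup>2) y"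
    by (simp add: step_pow_Suc step_pow_diff flip: step_op_variance_eq)
  also have "\<dots> = 2 * step_pow k (carre_du_champ \<mu> g) y - step_pow k (\<lambda>x. (step_op g x - g x)\<^sup>2) y"
    by (simp add: step_pow_diff step_pow_cmult)
  also have "\<dots> \<le> 2 * step_pow n (carre_du_champ \<mu> f) y - (step_pow k (\<lambda>x. step_op g x - g x) y)\<^sup>2"
  proof -
    have "step_pow k (carre_du_champ \<mu> g) y \<le> step_pow k (step_pow m (carre_du_champ \<mu> f)) y"
      unfolding g_def by (intro step_pow_mono carre_du_champ_step_pow_le)
    then show ?thesis
      using step_pow_jensen[of k "\<lambda>x. step_op g x - g x" y] assms by (simp add: step_pow_add)
  qed
  also have "step_pow k (\<lambda>x. step_op g x - g x) y = step_pow (Suc n) f y - step_pow n f y"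
    using assms by (simp add: g_def step_pow_diff flip: step_pow_Suc' step_pow_add)
  finally show ?thesis
    by (simp add: g_def flip: step_pow_Suc')
qed

lemma step_pow_poincare:
  "step_pow (Suc n) (\<lambda>x. (f x)\<^sup>2) y + real (Suc n) * (step_pow (Suc n) f y - step_pow n f y)\<^sup>2
     \<le> (step_pow (Suc n) f y)\<^sup>2 + 2 * real (Suc n) * step_pow n (carre_du_champ \<mu> f) y"
proof -
  define a where "a k = step_pow k (\<lambda>x. (step_pow (Suc n - k) f x)\<^sup>2) y" for k
  define C where "C = 2 * step_pow n (carre_du_champ \<mu> f) y - (step_pow (Suc n) f y - step_pow n f y)\<^sup>2"
  have "a (Suc k) - a k \<le> C" if "k < Suc n" for k
  proof -
    have "Suc n - k = Suc (n - k)" "Suc n - Suc k = n - k" "n = k + (n - k)"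
      using that by auto
    then show ?thesis
      unfolding a_def C_def by (metis step_pow_telescoping_term_le)
  qed
  then have "(\<Sum>k<Suc n. a (Suc k) - a k) \<le> real (Suc n) * C"
    using sum_mono[of "{..<Suc n}" "\<lambda>k. a (Suc k) - a k" "\<lambda>k. C"] by simp
  then have "a (Suc n) - a 0 \<le> real (Suc n) * C"
    by (simp only: sum_lessThan_telescope)
  then show ?thesis
    by (simp add: a_def C_def algebra_simps)
qed

end

theorem corollary3:
  fixes \<mu> :: "'a::group_add pmf" and f :: "'a \<Rightarrow> real" and t :: real
  assumes fin: "finite (set_pmf \<mu>)"
    and A1: "\<And>x z. pmf \<mu> (x + z + - x) = pmf \<mu> z"
    and A2: "\<And>z. pmf \<mu> (- z) = pmf \<mu> z"
    and t: "t \<ge> 0"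
    and finGamma: "(\<lambda>x. chain_law \<mu> t x * carre_du_champ \<mu> f x) summable_on UNIV"
  shows "(\<lambda>x. chain_law \<mu> t x * (f x)\<^sup>2) summable_on UNIV
    \<and> chain_var \<mu> t f \<le> 2 * t * chain_expect \<mu> t (carre_du_champ \<mu> f)"
proof -
  interpret conjugation_invariant_walk \<mu>
    using fin A1 by unfold_locales
  have gamma: "summable (\<lambda>n. poisson_weight t n * step_pow n (carre_du_champ \<mu> f) 0)"
    using summable_on_chain_iff[where g = "carre_du_champ \<mu> f", OF t carre_du_champ_nonneg] finGamma by blast
  have base: "step_pow 0 (\<lambda>x. (f x)\<^sup>2) 0 = (step_pow 0 f 0)\<^sup>2"
    by simp
  note mixture = poisson_mixture_variance_le[OF t gamma step_pow_jensen base step_pow_poincare]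
  have "chain_expect \<mu> t (\<lambda>x. (f x)\<^sup>2) = (\<Sum>n. poisson_weight t n * step_pow n (\<lambda>x. (f x)\<^sup>2) 0)"
    by (rule chain_expect_eq_suminf[OF t summable_on_joint_law_nonneg[OF t _ mixture(1)]]) simp
  moreover have "chain_expect \<mu> t f = (\<Sum>n. poisson_weight t n * step_pow n f 0)"
    by (rule chain_expect_eq_suminf[OF t summable_on_joint_law_of_square[OF t mixture(1)]])
  moreover have "chain_expect \<mu> t (carre_du_champ \<mu> f)
      = (\<Sum>n. poisson_weight t n * step_pow n (carre_du_champ \<mu> f) 0)"
    by (rule chain_expect_eq_suminf[OF t summable_on_joint_law_nonneg[OF t carre_du_champ_nonneg gamma]])
  moreover have "(\<lambda>x. chain_law \<mu> t x * (f x)\<^sup>2) summable_on UNIV"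
    using mixture(1) summable_on_chain_iff[OF t, of "\<lambda>x. (f x)\<^sup>2"] by simp
  ultimately show ?thesis
    using mixture(3) by (simp add: chain_var_def)
qed

end
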